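(* Let $G$ be a finite group, with cardinality $|G|$, acting linearly and isometrically on $\mathbb{R}^n$. Let $X\sim\mathcal{N}(t_0,s^2\,\mathrm{Id}_{\mathbb{R}^n})$ with $s>0$ and let $m_\star$ be a global minimiser of $F$. Then $$d_Q([t_0],[m_\star])\le s\sqrt{8\log|G|}.$$
   Context: The action is linear and isometric: each $x\mapsto g\cdot x$ is linear with $\|g\cdot x\|=\|x\|$ (Euclidean norm). $[m]=\{g\cdot m:g\in G\}$, $d_Q([a],[b])=\min_{g\in G}\|g\cdot a-b\|$, and $F(m)=\mathbb{E}\big(\min_{g\in G}\|g\cdot X-m\|^2\big)$. *)

theory Defs
  imports "HOL-Probability.Probability" "HOL-Algebra.Group"
begin

definition gaussian_measure :: "real^'n \<Rightarrow> real \<Rightarrow> (real^'n) measure" where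
  "gaussian_measure t0 s = density lborel
     (\<lambda>x. ennreal ((2 * pi * s\<^sup>2) powr (- real CARD('n) / 2)
                    * exp (- (norm (x - t0))\<^sup>2 / (2 * s\<^sup>2))))"

definition linear_isometric_action ::
  "('g, 'b) monoid_scheme \<Rightarrow> ('g \<Rightarrow> real^'n \<Rightarrow> real^'n) \<Rightarrow> bool" where
  "linear_isometric_action G act \<longleftrightarrow>
     (\<forall>g\<in>carrier G. linear (act g) \<and> (\<forall>x. norm (act g x) = norm x)) \<and>
     act \<one>\<^bsub>G\<^esub> = id \<and>
     (\<forall>g\<in>carrier G. \<forall>h\<in>carrier G. act (g \<otimes>\<^bsub>G\<^esub> h) = act g \<circ> act h)"

definition dQ :: "('g, 'b) monoid_scheme \<Rightarrow> ('g \<Rightarrow> real^'n \<Rightarrow> real^'n)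
                  \<Rightarrow> real^'n \<Rightarrow> real^'n \<Rightarrow> real" where
  "dQ G act a b = Min ((\<lambda>g. norm (act g a - b)) ` carrier G)"

definition Ffun :: "'a measure \<Rightarrow> ('a \<Rightarrow> real^'n) \<Rightarrow> ('g, 'b) monoid_scheme
                    \<Rightarrow> ('g \<Rightarrow> real^'n \<Rightarrow> real^'n) \<Rightarrow> real^'n \<Rightarrow> real" where
  "Ffun M X G act m = (\<integral>\<omega>. Min ((\<lambda>g. (norm (act g (X \<omega>) - m))\<^sup>2) ` carrier G) \<partial>M)"

end

(*
  Write Y = X - t0 and k = 1/(4 s^2).  Bounding the orbit distance of X to t0 by the identity
  element and expanding |g X - m|^2 around g t0 gives, with the minimising g for m,
    k (min_g |g X - t0|^2 - min_g |g X - m|^2) <= -k |g t0 - m|^2 + <w_g, Y>,   |w_g| = 2 k |g t0 - m|.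
  The tangent bound z <= e^(z - c) + c - 1 replaces the single minimising g by a sum over all of G,
  and the Gaussian moment generating function gives E e^(<w_g, Y>) = e^(2 s^2 k^2 |g t0 - m|^2), so
  each summand has expectation e^(-|g t0 - m|^2 / (8 s^2)) <= e^(-d_Q(t0, m)^2 / (8 s^2)).  Optimising c,
    k (F t0 - F m) <= ln |G| - d_Q(t0, m)^2 / (8 s^2)   for every m,
  and at a minimiser m the left-hand side is nonnegative.
*)

theory Submission
  imports Defs
begin

definition gaussian_pdf :: "real^'n \<Rightarrow> real \<Rightarrow> real^'n \<Rightarrow> real" where
  "gaussian_pdf t0 s x =
     (2 * pi * s\<^sup>2) powr (- real CARD('n) / 2) * exp (- (norm (x - t0))\<^sup>2 / (2 * s\<^sup>2))"

lemma gaussian_pdf_nonneg: "0 \<le> gaussian_pdf t0 s x"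
  unfolding gaussian_pdf_def by simp

lemma borel_measurable_gaussian_pdf [measurable]: "gaussian_pdf t0 s \<in> borel_measurable borel"
  unfolding gaussian_pdf_def by measurable

lemma gaussian_measure_density:
  "gaussian_measure t0 s = density lborel (\<lambda>x. ennreal (gaussian_pdf t0 s x))"
  unfolding gaussian_measure_def gaussian_pdf_def ..

lemma gaussian_pdf_mult_exp_inner:
  assumes "s \<noteq> 0"
  shows "gaussian_pdf t0 s x * exp (w \<bullet> (x - t0))
           = exp (s\<^sup>2 * (norm w)\<^sup>2 / 2) * gaussian_pdf t0 s (x - s\<^sup>2 *\<^sub>R w)"
proof -
  have "(norm (x - s\<^sup>2 *\<^sub>R w - t0))\<^sup>2
          = (norm (x - t0))\<^sup>2 - 2 * s\<^sup>2 * (w \<bullet> (x - t0)) + s\<^sup>2 * s\<^sup>2 * (norm w)\<^sup>2"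
    unfolding power2_norm_eq_inner
    by (simp add: inner_diff_left inner_diff_right inner_commute algebra_simps power2_eq_square)
  then have "- (norm (x - t0))\<^sup>2 / (2 * s\<^sup>2) + w \<bullet> (x - t0)
               = s\<^sup>2 * (norm w)\<^sup>2 / 2 - (norm (x - s\<^sup>2 *\<^sub>R w - t0))\<^sup>2 / (2 * s\<^sup>2)"
    using assms by (simp add: field_simps power2_eq_square)
  then show ?thesis
    unfolding gaussian_pdf_def by (simp add: exp_add[symmetric] mult.assoc)
qed

lemma nn_integral_lborel_translate:
  fixes c :: "'a::euclidean_space"
  assumes "f \<in> borel_measurable borel"
  shows "(\<integral>\<^sup>+x. f (x + c) \<partial>lborel) = (\<integral>\<^sup>+x. f x \<partial>lborel)"
proof -
  have "(\<integral>\<^sup>+x. f x \<partial>lborel) = (\<integral>\<^sup>+x. f x \<partial>distr lborel borel ((+) c))"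
    by (simp add: lborel_distr_plus)
  also have "\<dots> = (\<integral>\<^sup>+x. f (c + x) \<partial>lborel)"
    using assms by (intro nn_integral_distr) auto
  finally show ?thesis
    by (simp add: add.commute)
qed

lemma square_le_exp_plus_exp_neg: "(x::real)\<^sup>2 \<le> 2 * (exp x + exp (- x))"
proof -
  have "y\<^sup>2 \<le> 2 * exp y" if "0 \<le> y" for y :: real
    using exp_lower_Taylor_quadratic[OF that] that by simp
  then have "x\<^sup>2 \<le> 2 * exp \<bar>x\<bar>"
    by (metis abs_ge_zero power2_abs)
  also have "\<dots> \<le> 2 * (exp x + exp (- x))"
    by (cases "0 \<le> x") auto
  finally show ?thesis .
qed

text \<open>The tangent line of \<open>ln\<close> at \<open>exp c\<close> bounds the log-sum-exp of \<open>z\<close>, hence each \<open>z i\<close>.\<close>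
lemma le_exp_sum_tangent:
  fixes z :: "'i \<Rightarrow> real"
  assumes "finite I" and "i \<in> I"
  shows "z i \<le> exp (- c) * (\<Sum>j\<in>I. exp (z j)) + c - 1"
proof -
  have "z i \<le> exp (z i - c) + c - 1"
    using exp_ge_add_one_self[of "z i - c"] by linarith
  also have "exp (z i - c) = exp (- c) * exp (z i)"
    by (simp add: exp_diff exp_minus field_simps)
  also have "exp (- c) * exp (z i) \<le> exp (- c) * (\<Sum>j\<in>I. exp (z j))"
    using assms by (intro mult_left_mono member_le_sum) auto
  finally show ?thesis by simp
qed

locale gaussian_sample = prob_space M for M :: "'a measure" +
  fixes X :: "'a \<Rightarrow> real^'n" and t0 :: "real^'n" and s :: real
  assumes X_measurable [measurable]: "X \<in> borel_measurable M"
    and distr_X: "distr M lborel X = gaussian_measure t0 s"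
    and s_pos: "0 < s"
begin

lemma nn_integral_comp_X:
  assumes [measurable]: "f \<in> borel_measurable borel"
  shows "(\<integral>\<^sup>+\<omega>. f (X \<omega>) \<partial>M) = (\<integral>\<^sup>+x. ennreal (gaussian_pdf t0 s x) * f x \<partial>lborel)"
proof -
  have "(\<integral>\<^sup>+\<omega>. f (X \<omega>) \<partial>M) = integral\<^sup>N (distr M lborel X) f"
    by (intro nn_integral_distr[symmetric]) auto
  also have "\<dots> = (\<integral>\<^sup>+x. ennreal (gaussian_pdf t0 s x) * f x \<partial>lborel)"
    unfolding distr_X gaussian_measure_density by (intro nn_integral_density) auto
  finally show ?thesis .
qed

lemma nn_integral_gaussian_pdf: "(\<integral>\<^sup>+x. ennreal (gaussian_pdf t0 s x) \<partial>lborel) = 1"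
  using nn_integral_comp_X[of "\<lambda>_. 1"] by (simp add: emeasure_space_1)

lemma gaussian_mgf:
  "has_bochner_integral M (\<lambda>\<omega>. exp (w \<bullet> (X \<omega> - t0))) (exp (s\<^sup>2 * (norm w)\<^sup>2 / 2))"
proof (rule has_bochner_integral_nn_integral)
  let ?K = "exp (s\<^sup>2 * (norm w)\<^sup>2 / 2)"
  have "(\<integral>\<^sup>+\<omega>. ennreal (exp (w \<bullet> (X \<omega> - t0))) \<partial>M)
          = (\<integral>\<^sup>+x. ennreal (gaussian_pdf t0 s x) * ennreal (exp (w \<bullet> (x - t0))) \<partial>lborel)"
    by (rule nn_integral_comp_X) simp
  also have "\<dots> = (\<integral>\<^sup>+x. ennreal ?K * ennreal (gaussian_pdf t0 s (x + - (s\<^sup>2 *\<^sub>R w))) \<partial>lborel)"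
    using s_pos
    by (intro nn_integral_cong)
       (simp add: ennreal_mult'[symmetric] gaussian_pdf_nonneg gaussian_pdf_mult_exp_inner)
  also have "\<dots> = ennreal ?K * (\<integral>\<^sup>+x. ennreal (gaussian_pdf t0 s (x + - (s\<^sup>2 *\<^sub>R w))) \<partial>lborel)"
    by (rule nn_integral_cmult) simp
  also have "(\<integral>\<^sup>+x. ennreal (gaussian_pdf t0 s (x + - (s\<^sup>2 *\<^sub>R w))) \<partial>lborel) = 1"
    by (subst nn_integral_lborel_translate) (simp_all add: nn_integral_gaussian_pdf)
  finally show "(\<integral>\<^sup>+\<omega>. ennreal (exp (w \<bullet> (X \<omega> - t0))) \<partial>M) = ennreal ?K"
    by simp
qed auto

text \<open>Coordinatewise, squares are dominated by the moment generating function.\<close>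
lemma integrable_norm_diff_square: "integrable M (\<lambda>\<omega>. (norm (X \<omega> - m))\<^sup>2)"
proof (rule Bochner_Integration.integrable_bound)
  let ?B = "\<lambda>\<omega>. \<Sum>b\<in>Basis. 2 * (exp (b \<bullet> (t0 - m)) * exp (b \<bullet> (X \<omega> - t0))
                              + exp (- b \<bullet> (t0 - m)) * exp (- b \<bullet> (X \<omega> - t0)))"
  have "integrable M (\<lambda>\<omega>. exp (v \<bullet> (X \<omega> - t0)))" for v
    by (rule integrable.intros[OF gaussian_mgf])
  then show "integrable M ?B"
    by (intro Bochner_Integration.integrable_sum Bochner_Integration.integrable_add
        Bochner_Integration.integrable_mult_right)
  show "AE \<omega> in M. norm ((norm (X \<omega> - m))\<^sup>2) \<le> norm (?B \<omega>)"
  proof (intro AE_I2)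
    fix \<omega>
    have split: "exp (v \<bullet> (t0 - m)) * exp (v \<bullet> (X \<omega> - t0)) = exp (v \<bullet> (X \<omega> - m))" for v
      by (simp add: exp_add[symmetric] inner_diff_right)
    have "(norm (X \<omega> - m))\<^sup>2 = (\<Sum>b\<in>(Basis::(real^'n) set). (b \<bullet> (X \<omega> - m))\<^sup>2)"
      unfolding power2_norm_eq_inner
      by (subst euclidean_inner) (simp add: power2_eq_square inner_commute)
    also have "\<dots> \<le> ?B \<omega>"
      unfolding split by (intro sum_mono) (use square_le_exp_plus_exp_neg in auto)
    finally show "norm ((norm (X \<omega> - m))\<^sup>2) \<le> norm (?B \<omega>)"
      by simp
  qed
qed measurable

end

lemma norm_adjoint_orthogonal_transformation:
  fixes f :: "'a::euclidean_space \<Rightarrow> 'a"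
  assumes "orthogonal_transformation f"
  shows "norm (adjoint f v) = norm v"
proof -
  obtain u where u: "v = f u"
    using orthogonal_transformation_surj[OF assms] by (metis surjD)
  have "adjoint f (f u) = u"
  proof (rule vector_eq_ldot[THEN iffD1], rule allI)
    fix x
    show "x \<bullet> adjoint f (f u) = x \<bullet> u"
      using assms adjoint_works[OF orthogonal_transformation_linear[OF assms]]
      by (simp add: orthogonal_transformation_def)
  qed
  then show ?thesis
    using assms u by (simp add: orthogonal_transformation)
qed

definition orbit_sq_dist ::
  "('g, 'b) monoid_scheme \<Rightarrow> ('g \<Rightarrow> real^'n \<Rightarrow> real^'n) \<Rightarrow> real^'n \<Rightarrow> real^'n \<Rightarrow> real" where
  "orbit_sq_dist G act x m = Min ((\<lambda>g. (norm (act g x - m))\<^sup>2) ` carrier G)"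

lemma Ffun_eq_integral_orbit_sq_dist:
  "Ffun M X G act m = (\<integral>\<omega>. orbit_sq_dist G act (X \<omega>) m \<partial>M)"
  unfolding Ffun_def orbit_sq_dist_def ..

locale finite_isometric_action =
  fixes G :: "('g, 'b) monoid_scheme" and act :: "'g \<Rightarrow> real^'n \<Rightarrow> real^'n"
  assumes group: "group G"
    and finite_carrier: "finite (carrier G)"
    and action: "linear_isometric_action G act"
begin

lemma one_in_carrier: "\<one>\<^bsub>G\<^esub> \<in> carrier G"
  using group by (simp add: group.is_monoid monoid.one_closed)

lemma carrier_nonempty: "carrier G \<noteq> {}"
  using one_in_carrier by auto

lemma act_one: "act \<one>\<^bsub>G\<^esub> = id"
  using action unfolding linear_isometric_action_def by simp

lemma orthogonal_transformation_act: "g \<in> carrier G \<Longrightarrow> orthogonal_transformation (act g)"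
  using action unfolding linear_isometric_action_def orthogonal_transformation by simp

lemma borel_measurable_act:
  assumes "g \<in> carrier G"
  shows "act g \<in> borel_measurable borel"
proof -
  have "linear (act g)"
    using assms by (intro orthogonal_transformation_linear orthogonal_transformation_act)
  then show ?thesis
    by (intro borel_measurable_continuous_onI linear_continuous_on) (simp add: linear_conv_bounded_linear)
qed

lemma norm_act_diff_square:
  assumes "g \<in> carrier G"
  shows "(norm (act g x - m))\<^sup>2
           = (norm (act g t - m))\<^sup>2 + 2 * (adjoint (act g) (act g t - m) \<bullet> (x - t)) + (norm (x - t))\<^sup>2"
proof -
  have orth: "orthogonal_transformation (act g)"
    using assms by (rule orthogonal_transformation_act)
  have lin: "linear (act g)"
    using orth by (rule orthogonal_transformation_linear)
  have "(norm (act g x - m))\<^sup>2 = (norm ((act g t - m) + act g (x - t)))\<^sup>2"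
    by (simp add: linear_diff[OF lin])
  also have "\<dots> = (norm (act g t - m))\<^sup>2 + 2 * ((act g t - m) \<bullet> act g (x - t)) + (norm (act g (x - t)))\<^sup>2"
    using dot_norm[of "act g t - m" "act g (x - t)"] by simp
  also have "\<dots> = (norm (act g t - m))\<^sup>2 + 2 * (adjoint (act g) (act g t - m) \<bullet> (x - t)) + (norm (x - t))\<^sup>2"
    using orth by (simp add: adjoint_clauses(2)[OF lin] orthogonal_transformation_norm)
  finally show ?thesis .
qed

lemma orbit_sq_dist_attained: "\<exists>g\<in>carrier G. orbit_sq_dist G act x m = (norm (act g x - m))\<^sup>2"
proof -
  have "orbit_sq_dist G act x m \<in> (\<lambda>g. (norm (act g x - m))\<^sup>2) ` carrier G"
    unfolding orbit_sq_dist_def using finite_carrier carrier_nonempty by (intro Min_in) auto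
  then show ?thesis by auto
qed

lemma orbit_sq_dist_nonneg: "0 \<le> orbit_sq_dist G act x m"
  by (metis orbit_sq_dist_attained zero_le_power2)

lemma orbit_sq_dist_le: "g \<in> carrier G \<Longrightarrow> orbit_sq_dist G act x m \<le> (norm (act g x - m))\<^sup>2"
  unfolding orbit_sq_dist_def using finite_carrier by (intro Min_le) auto

lemma orbit_sq_dist_le_sq_dist: "orbit_sq_dist G act x m \<le> (norm (x - m))\<^sup>2"
  using orbit_sq_dist_le[OF one_in_carrier] by (simp add: act_one)

lemma borel_measurable_orbit_sq_dist [measurable]:
  assumes [measurable]: "f \<in> borel_measurable N"
  shows "(\<lambda>\<omega>. orbit_sq_dist G act (f \<omega>) m) \<in> borel_measurable N"
  unfolding orbit_sq_dist_def
proof (intro borel_measurable_Min finite_carrier)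
  fix g
  assume "g \<in> carrier G"
  note [measurable] = borel_measurable_act[OF this]
  show "(\<lambda>\<omega>. (norm (act g (f \<omega>) - m))\<^sup>2) \<in> borel_measurable N"
    by measurable
qed

lemma dQ_le: "g \<in> carrier G \<Longrightarrow> dQ G act a b \<le> norm (act g a - b)"
  unfolding dQ_def using finite_carrier by (intro Min_le) auto

lemma dQ_nonneg: "0 \<le> dQ G act a b"
proof -
  have "dQ G act a b \<in> (\<lambda>g. norm (act g a - b)) ` carrier G"
    unfolding dQ_def using finite_carrier carrier_nonempty by (intro Min_in) auto
  then show ?thesis by auto
qed

lemma orbit_sq_dist_gap_le:
  assumes "0 \<le> k"
  shows "k * (orbit_sq_dist G act x t - orbit_sq_dist G act x m)
           \<le> exp (- c) * (\<Sum>g\<in>carrier G.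
                exp (- k * ((norm (act g t - m))\<^sup>2 + 2 * (adjoint (act g) (act g t - m) \<bullet> (x - t)))))
             + c - 1"
proof -
  obtain g where g: "g \<in> carrier G" and min: "orbit_sq_dist G act x m = (norm (act g x - m))\<^sup>2"
    using orbit_sq_dist_attained by blast
  have "k * (orbit_sq_dist G act x t - orbit_sq_dist G act x m)
          \<le> k * ((norm (x - t))\<^sup>2 - (norm (act g x - m))\<^sup>2)"
    unfolding min using assms orbit_sq_dist_le_sq_dist by (intro mult_left_mono) auto
  also have "\<dots> = - k * ((norm (act g t - m))\<^sup>2 + 2 * (adjoint (act g) (act g t - m) \<bullet> (x - t)))"
    unfolding norm_act_diff_square[OF g, of x m t] by (simp add: algebra_simps)
  also have "\<dots> \<le> exp (- c) * (\<Sum>g\<in>carrier G.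
                exp (- k * ((norm (act g t - m))\<^sup>2 + 2 * (adjoint (act g) (act g t - m) \<bullet> (x - t)))))
             + c - 1"
    by (rule le_exp_sum_tangent[OF finite_carrier g])
  finally show ?thesis .
qed

end

locale gaussian_orbit = gaussian_sample M X t0 s + finite_isometric_action G act
  for M :: "'a measure" and X :: "'a \<Rightarrow> real^'n" and t0 s
    and G :: "('g, 'b) monoid_scheme" and act :: "'g \<Rightarrow> real^'n \<Rightarrow> real^'n"
begin

lemma integrable_orbit_sq_dist: "integrable M (\<lambda>\<omega>. orbit_sq_dist G act (X \<omega>) m)"
  by (rule Bochner_Integration.integrable_bound[OF integrable_norm_diff_square[of m]])
     (auto simp: orbit_sq_dist_nonneg orbit_sq_dist_le_sq_dist)

lemma has_bochner_integral_exp_orbit_term: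
  assumes "g \<in> carrier G"
  shows "has_bochner_integral M
           (\<lambda>\<omega>. exp (- 1 / (4 * s\<^sup>2) * ((norm (act g t0 - m))\<^sup>2
                      + 2 * (adjoint (act g) (act g t0 - m) \<bullet> (X \<omega> - t0)))))
           (exp (- (norm (act g t0 - m))\<^sup>2 / (8 * s\<^sup>2)))"
proof -
  define D where "D = act g t0 - m"
  define w where "w = (- 1 / (2 * s\<^sup>2)) *\<^sub>R adjoint (act g) D"
  have norm_w: "(norm w)\<^sup>2 = (norm D)\<^sup>2 / (4 * s\<^sup>2 * s\<^sup>2)"
    unfolding w_def using s_pos
    by (simp add: norm_adjoint_orthogonal_transformation[OF orthogonal_transformation_act[OF assms]]
                  power_divide power2_eq_square)
  have "has_bochner_integral M (\<lambda>\<omega>. exp (- (norm D)\<^sup>2 / (4 * s\<^sup>2)) * exp (w \<bullet> (X \<omega> - t0)))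
          (exp (- (norm D)\<^sup>2 / (4 * s\<^sup>2)) * exp (s\<^sup>2 * (norm w)\<^sup>2 / 2))"
    by (intro has_bochner_integral_mult_right gaussian_mgf)
  moreover have "exp (- (norm D)\<^sup>2 / (4 * s\<^sup>2)) * exp (w \<bullet> (X \<omega> - t0))
      = exp (- 1 / (4 * s\<^sup>2) * ((norm D)\<^sup>2 + 2 * (adjoint (act g) D \<bullet> (X \<omega> - t0))))" for \<omega>
    unfolding w_def using s_pos by (simp add: exp_add[symmetric] field_simps)
  moreover have "exp (- (norm D)\<^sup>2 / (4 * s\<^sup>2)) * exp (s\<^sup>2 * (norm w)\<^sup>2 / 2)
      = exp (- (norm D)\<^sup>2 / (8 * s\<^sup>2))"
    unfolding norm_w using s_pos by (simp add: exp_add[symmetric] field_simps power2_eq_square)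
  ultimately show ?thesis
    unfolding D_def by simp
qed

lemma Ffun_gap_bound:
  "(Ffun M X G act t0 - Ffun M X G act m) / (4 * s\<^sup>2)
     \<le> ln (card (carrier G)) - (dQ G act t0 m)\<^sup>2 / (8 * s\<^sup>2)"
proof -
  define N where "N = real (card (carrier G))"
  define d where "d = dQ G act t0 m"
  \<comment> \<open>the choice of \<open>c\<close> that minimises the final bound \<open>exp (- c) * N * exp (- d\<^sup>2 / (8 * s\<^sup>2)) + c - 1\<close>\<close>
  define c where "c = ln N - d\<^sup>2 / (8 * s\<^sup>2)"
  define T where "T g \<omega> = exp (- 1 / (4 * s\<^sup>2) * ((norm (act g t0 - m))\<^sup>2
                      + 2 * (adjoint (act g) (act g t0 - m) \<bullet> (X \<omega> - t0))))" for g \<omega>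
  have N_pos: "0 < N"
    unfolding N_def using finite_carrier carrier_nonempty by (simp add: card_gt_0_iff)
  have T: "integrable M (T g)" "(\<integral>\<omega>. T g \<omega> \<partial>M) = exp (- (norm (act g t0 - m))\<^sup>2 / (8 * s\<^sup>2))"
    if "g \<in> carrier G" for g
    using has_bochner_integral_exp_orbit_term[OF that, of m] unfolding T_def has_bochner_integral_iff by auto
  have sum_T_int: "integrable M (\<lambda>\<omega>. \<Sum>g\<in>carrier G. T g \<omega>)"
    using T(1) by (rule Bochner_Integration.integrable_sum)
  have sum_T: "(\<integral>\<omega>. (\<Sum>g\<in>carrier G. T g \<omega>) \<partial>M)
                 = (\<Sum>g\<in>carrier G. exp (- (norm (act g t0 - m))\<^sup>2 / (8 * s\<^sup>2)))"
    using T by (simp add: Bochner_Integration.integral_sum)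
  have term_le: "exp (- (norm (act g t0 - m))\<^sup>2 / (8 * s\<^sup>2)) \<le> exp (- d\<^sup>2 / (8 * s\<^sup>2))"
    if "g \<in> carrier G" for g
  proof -
    have "d\<^sup>2 \<le> (norm (act g t0 - m))\<^sup>2"
      unfolding d_def using dQ_le[OF that] dQ_nonneg by (rule power_mono)
    then show ?thesis
      using s_pos by (simp add: divide_right_mono)
  qed
  have "(Ffun M X G act t0 - Ffun M X G act m) / (4 * s\<^sup>2)
          = (\<integral>\<omega>. 1 / (4 * s\<^sup>2) * (orbit_sq_dist G act (X \<omega>) t0 - orbit_sq_dist G act (X \<omega>) m) \<partial>M)"
    unfolding Ffun_eq_integral_orbit_sq_dist using integrable_orbit_sq_dist by simp
  also have "\<dots> \<le> (\<integral>\<omega>. exp (- c) * (\<Sum>g\<in>carrier G. T g \<omega>) + c - 1 \<partial>M)"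
  proof (rule integral_mono)
    show "integrable M (\<lambda>\<omega>. 1 / (4 * s\<^sup>2) * (orbit_sq_dist G act (X \<omega>) t0 - orbit_sq_dist G act (X \<omega>) m))"
      using integrable_orbit_sq_dist by simp
    show "integrable M (\<lambda>\<omega>. exp (- c) * (\<Sum>g\<in>carrier G. T g \<omega>) + c - 1)"
      using sum_T_int by simp
    show "1 / (4 * s\<^sup>2) * (orbit_sq_dist G act (X \<omega>) t0 - orbit_sq_dist G act (X \<omega>) m)
            \<le> exp (- c) * (\<Sum>g\<in>carrier G. T g \<omega>) + c - 1" for \<omega>
      unfolding T_def using orbit_sq_dist_gap_le[of "1 / (4 * s\<^sup>2)"] by simp
  qed
  also have "\<dots> = exp (- c) * (\<Sum>g\<in>carrier G. exp (- (norm (act g t0 - m))\<^sup>2 / (8 * s\<^sup>2))) + c - 1"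
    using sum_T_int by (simp add: sum_T prob_space)
  also have "\<dots> \<le> exp (- c) * (N * exp (- d\<^sup>2 / (8 * s\<^sup>2))) + c - 1"
    using sum_mono[OF term_le] unfolding N_def by simp
  also have "\<dots> = c"
    unfolding c_def using N_pos by (simp add: exp_diff exp_minus)
  finally show ?thesis
    unfolding c_def d_def N_def .
qed

end

theorem mainTheorem6:
  fixes G :: "('g, 'b) monoid_scheme"
    and act :: "'g \<Rightarrow> real^'n \<Rightarrow> real^'n"
    and M :: "'a measure" and X :: "'a \<Rightarrow> real^'n"
    and t0 m_star :: "real^'n" and s :: real
  assumes "group G" and "finite (carrier G)"
    and "linear_isometric_action G act"
    and "prob_space M"
    and "X \<in> borel_measurable M"
    and "distr M lborel X = gaussian_measure t0 s"
    and "s > 0"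
    and "\<forall>m. Ffun M X G act m_star \<le> Ffun M X G act m"
  shows "dQ G act t0 m_star \<le> s * sqrt (8 * ln (real (card (carrier G))))"
proof -
  have orbit: "gaussian_orbit M X t0 s G act"
    by (intro gaussian_orbit.intro gaussian_sample.intro gaussian_sample_axioms.intro
        finite_isometric_action.intro) (fact assms)+
  let ?d = "dQ G act t0 m_star" and ?N = "real (card (carrier G))"
  have "0 \<le> (Ffun M X G act t0 - Ffun M X G act m_star) / (4 * s\<^sup>2)"
    using assms(8) by simp
  with gaussian_orbit.Ffun_gap_bound[OF orbit, of m_star] have "?d\<^sup>2 / (8 * s\<^sup>2) \<le> ln ?N"
    by linarith
  then have "?d\<^sup>2 \<le> ln ?N * (8 * s\<^sup>2)"
    using \<open>s > 0\<close> by (simp add: pos_divide_le_eq)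
  also have "\<dots> = s\<^sup>2 * (8 * ln ?N)"
    by (simp add: algebra_simps)
  finally have "?d \<le> sqrt (s\<^sup>2 * (8 * ln ?N))"
    by (rule real_le_rsqrt)
  then show ?thesis
    using \<open>s > 0\<close> by (simp add: real_sqrt_mult)
qed

end
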